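(* Let $f:\mathcal{X}\to\Delta^{k-1}$ be a classifier outputting confidence vectors. Let $P_S$ and $P_T$ be source and target distributions over $\mathcal{X}\times\mathcal{Y}$ with $k$ classes, and write $P_S(y)$, $P_T(y)$ for the source and target label distributions, viewed as distributions over one-hot vectors $\{0,1\}^k\cap\Delta^{k-1}$. Let $f_\# P_T(c)$ be the distribution of $f(x)$ for $x\sim P_T(x)$, and let $P_{\mathrm{pseudo}}(y)$ be the distribution of the one-hot vector $e_{\arg\max_j f_j(x)}$ for $x\sim P_T(x)$. Define $\hat\epsilon_{\mathrm{COT}}=W_\infty\bigl(f_\# P_T(c),P_S(y)\bigr)$. Then $$\hat\epsilon_{\mathrm{COT}}\ \ge\ 0.5\,W_\infty\bigl(P_{\mathrm{pseudo}}(y),P_T(y)\bigr)-W_\infty\bigl(P_S(y),P_T(y)\bigr).$$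
   Context: $\Delta^{k-1}=\{c\in\mathbb{R}^k: c_j\ge 0,\ \sum_j c_j=1\}$; $e_i$ is the $i$-th standard basis vector. For probability distributions $P,Q$ on $\mathbb{R}^k$, $W_\infty(P,Q)=\inf_{\pi\in\Pi(P,Q)}\int\|u-v\|_\infty\,d\pi(u,v)$ over couplings $\pi$ of $P$ and $Q$ (optimal transport distance with ground cost $\|u-v\|_\infty$). Ties in $\arg\max$ are broken by a fixed rule (e.g. smallest index). No assumption $P_S(y)=P_T(y)$ is made. *)

theory Defs
  imports "HOL-Probability.Probability"
begin

definition prob_simplex :: "(real ^ 'k::finite) set" where
  "prob_simplex = {c. (\<forall>j. c $ j \<ge> 0) \<and> (\<Sum>j\<in>UNIV. c $ j) = 1}"

definition linf_dist :: "real ^ 'k::finite \<Rightarrow> real ^ 'k \<Rightarrow> real" where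
  "linf_dist u v = (MAX i\<in>UNIV. \<bar>u $ i - v $ i\<bar>)"

definition onehot :: "'k::finite \<Rightarrow> real ^ 'k" where
  "onehot i = axis i 1"

definition argmax_idx :: "real ^ 'k::{finite,wellorder} \<Rightarrow> 'k" where
  "argmax_idx c = (LEAST j. \<forall>i. c $ i \<le> c $ j)"

definition couplings :: "'a measure \<Rightarrow> 'b measure \<Rightarrow> ('a \<times> 'b) measure set" where
  "couplings P Q = {\<pi>. prob_space \<pi> \<and> sets \<pi> = sets (P \<Otimes>\<^sub>M Q)
      \<and> distr \<pi> P fst = P \<and> distr \<pi> Q snd = Q}"

definition W_inf :: "(real ^ 'k::finite) measure \<Rightarrow> (real ^ 'k) measure \<Rightarrow> real" where
  "W_inf P Q = enn2real (INF \<pi>\<in>couplings P Q.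
      \<integral>\<^sup>+ z. ennreal (linf_dist (fst z) (snd z)) \<partial>\<pi>)"

end

theory Submission
  imports Defs
begin

text \<open>
  Write \<open>p\<close>, \<open>s\<close>, \<open>t\<close> for the class masses of the pseudo-label distribution, of \<open>P\<^sub>S(y)\<close> and
  of \<open>P\<^sub>T(y)\<close>, and \<open>TV(p, q) = \<Sum>\<^sub>i max 0 (p\<^sub>i - q\<^sub>i)\<close>. Distinct one-hot vectors are at
  sup-distance 1, and a point of the simplex with argmax \<open>i\<close> is at sup-distance at least 1/2
  from every \<open>e\<^sub>j\<close> with \<open>j \<noteq> i\<close>. So every coupling of \<open>f\<^sub>#P\<^sub>T\<close> with \<open>P\<^sub>S(y)\<close> moves at least
  \<open>max 0 (p\<^sub>i - s\<^sub>i)\<close> of the mass of the argmax region of class \<open>i\<close> over a distance at least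
  1/2, whence \<open>\<epsilon>\<^sub>C\<^sub>O\<^sub>T \<ge> TV(p, s) / 2\<close>; in the same way \<open>W\<^sub>\<infinity>(P\<^sub>S(y), P\<^sub>T(y)) \<ge> TV(s, t)\<close>.
  Conversely the maximal coupling of \<open>p\<close> and \<open>t\<close> shows \<open>W\<^sub>\<infinity>(P\<^sub>p\<^sub>s\<^sub>e\<^sub>u\<^sub>d\<^sub>o(y), P\<^sub>T(y)) \<le> TV(p, t)\<close>,
  and the triangle inequality for \<open>TV\<close> concludes.
\<close>

lemma onehot_component: "onehot i $ j = (if j = i then 1 else 0)"
  by (simp add: onehot_def axis_def)

lemma onehot_eq_iff [simp]: "onehot i = onehot j \<longleftrightarrow> i = j"
  by (metis onehot_component zero_neq_one)

lemma abs_component_le_linf_dist: "\<bar>u $ i - v $ i\<bar> \<le> linf_dist u v"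
  unfolding linf_dist_def by (rule Max_ge) auto

lemma linf_dist_leI: "(\<And>i. \<bar>u $ i - v $ i\<bar> \<le> c) \<Longrightarrow> linf_dist u v \<le> c"
  unfolding linf_dist_def by (subst Max_le_iff) auto

lemma linf_dist_nonneg: "0 \<le> linf_dist u v"
  using abs_component_le_linf_dist[of u _ v] abs_ge_zero order_trans by blast

lemma linf_dist_self [simp]: "linf_dist u u = 0"
  using linf_dist_leI[of u u 0] linf_dist_nonneg[of u u] by simp

lemma borel_measurable_linf_dist [measurable]:
  "(\<lambda>z. linf_dist (fst z) (snd z :: real ^ 'k::finite)) \<in> borel_measurable (borel \<Otimes>\<^sub>M borel)"
proof -
  have [measurable]:
    "(\<lambda>z. fst z $ i :: real) \<in> borel_measurable (borel \<Otimes>\<^sub>M (borel :: (real ^ 'k) measure))"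
    "(\<lambda>z. snd z $ i :: real) \<in> borel_measurable (borel \<Otimes>\<^sub>M (borel :: (real ^ 'k) measure))"
    for i :: 'k
    by (intro measurable_compose[OF measurable_fst borel_measurable_nth]
        measurable_compose[OF measurable_snd borel_measurable_nth])+
  show ?thesis
    unfolding linf_dist_def by measurable
qed

lemma prob_simplex_nonneg: "c \<in> prob_simplex \<Longrightarrow> 0 \<le> c $ i"
  by (simp add: prob_simplex_def)

lemma prob_simplex_le_1: "c \<in> prob_simplex \<Longrightarrow> c $ i \<le> 1"
  using member_le_sum[of i UNIV "\<lambda>j. c $ j"] by (simp add: prob_simplex_def)

lemma onehot_in_prob_simplex: "onehot i \<in> prob_simplex"
  by (simp add: prob_simplex_def onehot_component)

lemma linf_dist_prob_simplex_le_1: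
  assumes "u \<in> prob_simplex" "v \<in> prob_simplex"
  shows "linf_dist u v \<le> 1"
proof (rule linf_dist_leI)
  fix i
  show "\<bar>u $ i - v $ i\<bar> \<le> 1"
    using assms prob_simplex_nonneg prob_simplex_le_1 by (smt (verit))
qed

lemma linf_dist_onehot: "linf_dist (onehot i) (onehot j) = (if i = j then 0 else 1)"
  using abs_component_le_linf_dist[of "onehot i" i "onehot j"]
    linf_dist_prob_simplex_le_1[OF onehot_in_prob_simplex onehot_in_prob_simplex, of i j]
  by (cases "i = j") (simp_all add: onehot_component)

lemma prob_simplex_borel [measurable]: "prob_simplex \<in> sets borel"
  unfolding prob_simplex_def by measurable

lemma argmax_idx_eq_iff:
  "argmax_idx c = i \<longleftrightarrow> (\<forall>j. c $ j \<le> c $ i) \<and> (\<forall>j<i. c $ j < c $ i)"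
proof -
  let ?is_max = "\<lambda>j. \<forall>l. c $ l \<le> c $ j"
  obtain m where "?is_max m"
    using Max_ge[of "range (\<lambda>l. c $ l)"] Max_in[of "range (\<lambda>l. c $ l)"] by fastforce
  then have max: "?is_max (argmax_idx c)"
    unfolding argmax_idx_def by (rule LeastI)
  have least: "\<not> ?is_max j" if "j < argmax_idx c" for j
    using that unfolding argmax_idx_def by (rule not_less_Least)
  show ?thesis
    using max least by (metis linorder_neqE not_le)
qed

lemma argmax_idx_measurable [measurable]:
  "(argmax_idx :: real ^ 'k::{finite,wellorder} \<Rightarrow> 'k) \<in> measurable borel (count_space UNIV)"
proof (subst measurable_count_space_eq2_countable, intro conjI ballI)
  fix i :: 'k
  have "Measurable.pred borel (\<lambda>c. argmax_idx c = i)"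
    unfolding argmax_idx_eq_iff by measurable
  then show "argmax_idx -` {i} \<inter> space borel \<in> sets borel"
    by (simp add: pred_def vimage_def)
qed simp

lemma onehot_argmax_idx_measurable [measurable]:
  "(\<lambda>c. onehot (argmax_idx c)) \<in> borel_measurable (borel :: (real ^ 'k::{finite,wellorder}) measure)"
  by (rule measurable_compose[OF argmax_idx_measurable]) simp

lemma linf_dist_onehot_ge_half:
  assumes c: "c \<in> prob_simplex" and j: "argmax_idx c \<noteq> j"
  shows "1 / 2 \<le> linf_dist c (onehot j)"
proof -
  let ?i = "argmax_idx c"
  have "c $ j \<le> c $ ?i"
    using argmax_idx_eq_iff by blast
  moreover have "c $ ?i + c $ j \<le> (\<Sum>l\<in>UNIV. c $ l)"
    using sum_mono2[of UNIV "{?i, j}" "\<lambda>l. c $ l"] c j by (simp add: prob_simplex_def)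
  ultimately have "c $ j \<le> 1 / 2"
    using c by (simp add: prob_simplex_def)
  then show ?thesis
    using abs_component_le_linf_dist[of c j "onehot j"] by (simp add: onehot_component)
qed

definition simplex_distribution :: "(real ^ 'k::finite) measure \<Rightarrow> bool" where
  "simplex_distribution N \<longleftrightarrow>
     prob_space N \<and> sets N = sets borel \<and> (AE c in N. c \<in> prob_simplex)"

definition onehot_distribution :: "(real ^ 'k::finite) measure \<Rightarrow> bool" where
  "onehot_distribution N \<longleftrightarrow>
     prob_space N \<and> sets N = sets borel \<and> (AE c in N. c \<in> range onehot)"

definition label_mass :: "(real ^ 'k::finite) measure \<Rightarrow> 'k \<Rightarrow> real" where
  "label_mass N i = measure N {onehot i}"

definition tv_dist :: "('k::finite \<Rightarrow> real) \<Rightarrow> ('k \<Rightarrow> real) \<Rightarrow> real" where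
  "tv_dist p q = (\<Sum>i\<in>UNIV. max 0 (p i - q i))"

lemma tv_dist_nonneg: "0 \<le> tv_dist p q"
  unfolding tv_dist_def by (rule sum_nonneg) simp

lemma tv_dist_triangle: "tv_dist p r \<le> tv_dist p q + tv_dist q r"
  unfolding tv_dist_def sum.distrib[symmetric] by (rule sum_mono) linarith

lemma tv_dist_commute:
  assumes "sum p UNIV = 1" "sum q UNIV = 1"
  shows "tv_dist q p = tv_dist p q"
proof -
  have "tv_dist p q - tv_dist q p = (\<Sum>i\<in>UNIV. p i - q i)"
    unfolding tv_dist_def sum_subtractf[symmetric] by (rule sum.cong) auto
  also have "\<dots> = 0"
    using assms by (simp add: sum_subtractf)
  finally show ?thesis
    by simp
qed

lemma range_onehot_borel [measurable]: "range onehot \<in> sets borel"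
  by (intro borel_closed finite_imp_closed) simp

lemma onehot_distribution_imp_simplex_distribution:
  "onehot_distribution N \<Longrightarrow> simplex_distribution N"
  unfolding onehot_distribution_def simplex_distribution_def
  by (auto simp: onehot_in_prob_simplex)

lemma simplex_distribution_distr:
  assumes "prob_space M" "g \<in> borel_measurable M" "\<And>x. x \<in> space M \<Longrightarrow> g x \<in> prob_simplex"
  shows "simplex_distribution (distr M borel g)"
  using assms unfolding simplex_distribution_def
  by (simp add: prob_space.prob_space_distr AE_distr_iff)

lemma onehot_distribution_distr:
  assumes "prob_space M" "g \<in> borel_measurable M" "\<And>x. x \<in> space M \<Longrightarrow> g x \<in> range onehot"
  shows "onehot_distribution (distr M borel g)"
  using assms unfolding onehot_distribution_def
  by (simp add: prob_space.prob_space_distr AE_distr_iff)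

lemma emeasure_onehot_distribution:
  assumes N: "onehot_distribution N" and A: "A \<in> sets borel"
  shows "emeasure N A = (\<Sum>i | onehot i \<in> A. ennreal (label_mass N i))"
proof -
  interpret prob_space N
    using N by (simp add: onehot_distribution_def)
  have sets_N: "sets N = sets borel"
    using N by (simp add: onehot_distribution_def)
  have "emeasure N A = emeasure N (A \<inter> range onehot)"
    using N A sets_N by (intro emeasure_eq_AE) (auto simp: onehot_distribution_def)
  also have "\<dots> = (\<Sum>x \<in> A \<inter> range onehot. emeasure N {x})"
    using sets_N by (intro emeasure_eq_sum_singleton) auto
  also have "A \<inter> range onehot = onehot ` {i. onehot i \<in> A}"
    by auto
  also have "(\<Sum>x \<in> onehot ` {i. onehot i \<in> A}. emeasure N {x})
      = (\<Sum>i | onehot i \<in> A. emeasure N {onehot i})"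
    by (simp add: sum.reindex inj_on_def)
  finally show ?thesis
    by (simp add: label_mass_def emeasure_eq_measure)
qed

lemma sum_label_mass:
  assumes "onehot_distribution N"
  shows "sum (label_mass N) UNIV = 1"
proof -
  interpret prob_space N
    using assms by (simp add: onehot_distribution_def)
  have "ennreal (sum (label_mass N) UNIV) = emeasure N UNIV"
    using emeasure_onehot_distribution[OF assms, of UNIV]
    by (simp add: label_mass_def)
  also have "\<dots> = 1"
    using assms emeasure_space_1 sets_eq_imp_space_eq[of N borel]
    by (simp add: onehot_distribution_def)
  finally show ?thesis
    by (simp add: label_mass_def sum_nonneg)
qed

lemma onehot_distribution_eqI:
  assumes "onehot_distribution N" "onehot_distribution N'" "label_mass N = label_mass N'"
  shows "N = N'"
proof (rule measure_eqI)
  show "sets N = sets N'"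
    using assms by (simp add: onehot_distribution_def)
  show "emeasure N A = emeasure N' A" if "A \<in> sets N" for A
    using that assms by (simp add: emeasure_onehot_distribution onehot_distribution_def)
qed

section \<open>Couplings and transport cost\<close>

lemma
  assumes "\<pi> \<in> couplings M N"
  shows prob_space_coupling: "prob_space \<pi>"
    and space_coupling: "space \<pi> = space M \<times> space N"
    and measurable_coupling_fst: "fst \<in> measurable \<pi> M"
    and measurable_coupling_snd: "snd \<in> measurable \<pi> N"
  using assms sets_eq_imp_space_eq[of \<pi> "M \<Otimes>\<^sub>M N"] measurable_cong_sets[of \<pi> "M \<Otimes>\<^sub>M N"]
  by (auto simp: couplings_def space_pair_measure)

lemma measure_coupling_fst:
  assumes "\<pi> \<in> couplings M N" "A \<in> sets M"
  shows "measure \<pi> (A \<times> space N) = measure M A"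
proof -
  have "measure M A = measure (distr \<pi> M fst) A"
    using assms(1) by (simp add: couplings_def)
  also have "\<dots> = measure \<pi> (fst -` A \<inter> space \<pi>)"
    using assms by (simp add: measure_distr measurable_coupling_fst)
  also have "fst -` A \<inter> space \<pi> = A \<times> space N"
    using assms sets.sets_into_space by (auto simp: space_coupling)
  finally show ?thesis ..
qed

lemma measure_coupling_snd:
  assumes "\<pi> \<in> couplings M N" "B \<in> sets N"
  shows "measure \<pi> (space M \<times> B) = measure N B"
proof -
  have "measure N B = measure (distr \<pi> N snd) B"
    using assms(1) by (simp add: couplings_def)
  also have "\<dots> = measure \<pi> (snd -` B \<inter> space \<pi>)"
    using assms by (simp add: measure_distr measurable_coupling_snd)
  also have "snd -` B \<inter> space \<pi> = space M \<times> B"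
    using assms sets.sets_into_space by (auto simp: space_coupling)
  finally show ?thesis ..
qed

lemma AE_coupling_fst:
  assumes "\<pi> \<in> couplings M N" "AE x in M. P x"
  shows "AE z in \<pi>. P (fst z)"
proof (rule AE_distrD[OF measurable_coupling_fst[OF assms(1)]])
  from assms(1) have marginal: "distr \<pi> M fst = M"
    by (simp add: couplings_def)
  show "AE x in distr \<pi> M fst. P x"
    unfolding marginal by (fact assms(2))
qed

lemma AE_coupling_snd:
  assumes "\<pi> \<in> couplings M N" "AE y in N. P y"
  shows "AE z in \<pi>. P (snd z)"
proof (rule AE_distrD[OF measurable_coupling_snd[OF assms(1)]])
  from assms(1) have marginal: "distr \<pi> N snd = N"
    by (simp add: couplings_def)
  show "AE y in distr \<pi> N snd. P y"
    unfolding marginal by (fact assms(2))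
qed

lemma distr_pair_snd:
  assumes "prob_space M" "prob_space N"
  shows "distr (M \<Otimes>\<^sub>M N) N snd = N"
proof (rule measure_eqI)
  interpret M: prob_space M by (fact assms(1))
  interpret N: prob_space N by (fact assms(2))
  fix B assume "B \<in> sets (distr (M \<Otimes>\<^sub>M N) N snd)"
  then have B: "B \<in> sets N" by simp
  then have "emeasure (distr (M \<Otimes>\<^sub>M N) N snd) B = emeasure (M \<Otimes>\<^sub>M N) (space M \<times> B)"
    by (auto simp: emeasure_distr space_pair_measure dest: sets.sets_into_space
        intro!: arg_cong2[where f=emeasure])
  also have "\<dots> = emeasure N B"
    using B by (simp add: N.emeasure_pair_measure_Times M.emeasure_space_1)
  finally show "emeasure (distr (M \<Otimes>\<^sub>M N) N snd) B = emeasure N B" .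
qed simp

lemma pair_measure_in_couplings:
  "prob_space M \<Longrightarrow> prob_space N \<Longrightarrow> M \<Otimes>\<^sub>M N \<in> couplings M N"
  by (simp add: couplings_def prob_space_pair prob_space.distr_pair_fst distr_pair_snd)

definition transport_cost :: "((real ^ 'k::finite) \<times> (real ^ 'k)) measure \<Rightarrow> ennreal" where
  "transport_cost \<pi> = (\<integral>\<^sup>+ z. ennreal (linf_dist (fst z) (snd z)) \<partial>\<pi>)"

lemma W_inf_transport_cost: "W_inf M N = enn2real (INF \<pi>\<in>couplings M N. transport_cost \<pi>)"
  by (simp add: W_inf_def transport_cost_def)

lemma W_inf_nonneg: "0 \<le> W_inf M N"
  by (simp add: W_inf_def)

lemma transport_cost_le_1:
  assumes "\<pi> \<in> couplings M N" "simplex_distribution M" "simplex_distribution N"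
  shows "transport_cost \<pi> \<le> 1"
proof -
  interpret prob_space \<pi>
    using assms(1) by (rule prob_space_coupling)
  have "AE z in \<pi>. fst z \<in> prob_simplex"
    using assms(1,2) by (intro AE_coupling_fst) (auto simp: simplex_distribution_def)
  moreover have "AE z in \<pi>. snd z \<in> prob_simplex"
    using assms(1,3) by (intro AE_coupling_snd) (auto simp: simplex_distribution_def)
  ultimately have "transport_cost \<pi> \<le> (\<integral>\<^sup>+ z. 1 \<partial>\<pi>)"
    unfolding transport_cost_def
    by (intro nn_integral_mono_AE) (auto simp: linf_dist_prob_simplex_le_1)
  then show ?thesis
    by (simp add: emeasure_space_1)
qed

lemma W_inf_geI:
  assumes "simplex_distribution M" "simplex_distribution N"
    and lower: "\<And>\<pi>. \<pi> \<in> couplings M N \<Longrightarrow> ennreal x \<le> transport_cost \<pi>"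
  shows "x \<le> W_inf M N"
proof (cases "x \<le> 0")
  case True
  then show ?thesis
    using W_inf_nonneg[of M N] by linarith
next
  case False
  txt \<open>\<open>enn2real\<close> sends an infinite infimum to \<open>0\<close>, so the infimum must be bounded.\<close>
  have product: "M \<Otimes>\<^sub>M N \<in> couplings M N"
    using assms by (simp add: pair_measure_in_couplings simplex_distribution_def)
  have "ennreal x \<le> (INF \<pi>\<in>couplings M N. transport_cost \<pi>)"
    by (rule INF_greatest) (rule lower)
  moreover have "(INF \<pi>\<in>couplings M N. transport_cost \<pi>) \<le> 1"
    using INF_lower[OF product] transport_cost_le_1[OF product assms(1,2)] by (rule order_trans)
  ultimately have "enn2real (ennreal x) \<le> enn2real (INF \<pi>\<in>couplings M N. transport_cost \<pi>)"
    by (intro enn2real_mono) (auto simp: le_less_trans[OF _ ennreal_one_less_top])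
  then show ?thesis
    using False by (simp add: W_inf_transport_cost)
qed

lemma W_inf_leI:
  assumes "\<gamma> \<in> couplings M N" "transport_cost \<gamma> \<le> ennreal x" "0 \<le> x"
  shows "W_inf M N \<le> x"
proof -
  have "(INF \<pi>\<in>couplings M N. transport_cost \<pi>) \<le> ennreal x"
    using INF_lower[OF assms(1)] assms(2) by (rule order_trans)
  then show ?thesis
    using assms(3) by (simp add: W_inf_transport_cost enn2real_leI)
qed

section \<open>Lower bounds by total variation\<close>

lemma measure_coupling_moved_mass:
  assumes \<pi>: "\<pi> \<in> couplings M N" and N: "onehot_distribution N" and A: "A \<in> sets M"
  shows "measure M A - label_mass N i \<le> measure \<pi> (A \<times> (range onehot - {onehot i}))"
proof -
  interpret prob_space \<pi>
    using \<pi> by (rule prob_space_coupling)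
  have sets_N: "sets N = sets borel" and space_N: "space N = UNIV"
    using N sets_eq_imp_space_eq[of N borel] by (auto simp: onehot_distribution_def)
  have sets_\<pi>: "sets \<pi> = sets (M \<Otimes>\<^sub>M N)"
    using \<pi> by (simp add: couplings_def)
  have moved: "A \<times> (range onehot - {onehot i}) \<in> sets \<pi>"
    unfolding sets_\<pi> by (intro pair_measureI A) (simp add: sets_N)
  have kept: "space M \<times> {onehot i} \<in> sets \<pi>"
    unfolding sets_\<pi> by (intro pair_measureI) (simp_all add: sets_N)
  have "AE z in \<pi>. snd z \<in> range onehot"
    using \<pi> N by (intro AE_coupling_snd) (auto simp: onehot_distribution_def)
  then have "measure \<pi> (A \<times> space N)
      \<le> measure \<pi> (A \<times> (range onehot - {onehot i}) \<union> space M \<times> {onehot i})"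
    using moved kept sets.sets_into_space[OF A] by (intro finite_measure_mono_AE) auto
  also have "\<dots>
      \<le> measure \<pi> (A \<times> (range onehot - {onehot i})) + measure \<pi> (space M \<times> {onehot i})"
    using moved kept by (rule measure_Un_le)
  finally show ?thesis
    using \<pi> A by (simp add: measure_coupling_fst measure_coupling_snd sets_N label_mass_def)
qed

text \<open>
  A coupling must send at least \<open>max 0 (M (R i) - N {e\<^sub>i})\<close> of the mass in \<open>R i\<close> to one-hot
  vectors \<open>e\<^sub>j\<close> with \<open>j \<noteq> i\<close>, each at distance at least \<open>\<delta>\<close>.
\<close>

lemma transport_cost_ge_moved_mass:
  assumes \<pi>: "\<pi> \<in> couplings M N" and N: "onehot_distribution N"
    and R: "\<And>i. R i \<in> sets M" "disjoint_family R"
    and far: "\<And>i j c. i \<noteq> j \<Longrightarrow> c \<in> R i \<Longrightarrow> \<delta> \<le> linf_dist c (onehot j)" and "0 \<le> \<delta>"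
  shows "ennreal (\<delta> * tv_dist (\<lambda>i. measure M (R i)) (label_mass N)) \<le> transport_cost \<pi>"
proof -
  interpret prob_space \<pi>
    using \<pi> by (rule prob_space_coupling)
  define D where "D i = R i \<times> (range onehot - {onehot i})" for i
  have D: "D i \<in> sets \<pi>" for i
    using \<pi> N R(1) by (auto simp: D_def couplings_def onehot_distribution_def)
  have "tv_dist (\<lambda>i. measure M (R i)) (label_mass N) \<le> (\<Sum>i\<in>UNIV. measure \<pi> (D i))"
    unfolding tv_dist_def D_def
    by (intro sum_mono max.boundedI measure_nonneg measure_coupling_moved_mass \<pi> N R(1))
  also have "\<dots> = measure \<pi> (\<Union>i. D i)"
    using D R(2)
    by (intro finite_measure_finite_Union[symmetric]) (auto simp: disjoint_family_on_def D_def)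
  finally have "ennreal (\<delta> * tv_dist (\<lambda>i. measure M (R i)) (label_mass N))
      \<le> ennreal \<delta> * emeasure \<pi> (\<Union>i. D i)"
    using \<open>0 \<le> \<delta>\<close> by (simp add: emeasure_eq_measure mult_left_mono flip: ennreal_mult)
  also have "\<dots> = (\<integral>\<^sup>+ z. ennreal \<delta> * indicator (\<Union>i. D i) z \<partial>\<pi>)"
    using D by (simp add: nn_integral_cmult_indicator sets.countable_UN)
  also have "\<dots> \<le> transport_cost \<pi>"
    unfolding transport_cost_def
    by (intro nn_integral_mono) (force simp: D_def intro: ennreal_leI far split: split_indicator)
  finally show ?thesis .
qed

lemma tv_dist_le_W_inf:
  assumes "onehot_distribution M" "onehot_distribution N"
  shows "tv_dist (label_mass M) (label_mass N) \<le> W_inf M N"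
proof (rule W_inf_geI)
  show "simplex_distribution M" "simplex_distribution N"
    using assms by (simp_all add: onehot_distribution_imp_simplex_distribution)
  fix \<pi> assume "\<pi> \<in> couplings M N"
  then have "ennreal (1 * tv_dist (\<lambda>i. measure M {onehot i}) (label_mass N)) \<le> transport_cost \<pi>"
    by (rule transport_cost_ge_moved_mass)
      (use assms in \<open>auto simp: onehot_distribution_def disjoint_family_on_def linf_dist_onehot\<close>)
  then show "ennreal (tv_dist (label_mass M) (label_mass N)) \<le> transport_cost \<pi>"
    by (simp add: label_mass_def[abs_def])
qed

lemma label_mass_distr_argmax:
  fixes A :: "(real ^ 'k::{finite,wellorder}) measure"
  assumes "simplex_distribution A"
  shows "label_mass (distr A borel (\<lambda>c. onehot (argmax_idx c)))
           = (\<lambda>i. measure A (prob_simplex \<inter> {c. argmax_idx c = i}))"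
proof
  fix i :: 'k
  interpret prob_space A
    using assms by (simp add: simplex_distribution_def)
  have sets_A: "sets A = sets borel" and space_A: "space A = UNIV"
    using assms sets_eq_imp_space_eq[of A borel] by (auto simp: simplex_distribution_def)
  have [measurable]: "Measurable.pred borel (\<lambda>c. argmax_idx c = i)"
    by measurable
  have "(\<lambda>c. onehot (argmax_idx c)) \<in> borel_measurable A"
    unfolding measurable_cong_sets[OF sets_A refl] by (rule onehot_argmax_idx_measurable)
  then have "label_mass (distr A borel (\<lambda>c. onehot (argmax_idx c))) i
      = measure A {c. argmax_idx c = i}"
    by (simp add: label_mass_def measure_distr space_A vimage_def)
  also have "\<dots> = measure A (prob_simplex \<inter> {c. argmax_idx c = i})"
    using assms by (intro finite_measure_eq_AE) (auto simp: simplex_distribution_def sets_A)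
  finally show "label_mass (distr A borel (\<lambda>c. onehot (argmax_idx c))) i
      = measure A (prob_simplex \<inter> {c. argmax_idx c = i})" .
qed

lemma tv_dist_argmax_le_W_inf:
  fixes A B :: "(real ^ 'k::{finite,wellorder}) measure"
  assumes A: "simplex_distribution A" and B: "onehot_distribution B"
  shows "tv_dist (label_mass (distr A borel (\<lambda>c. onehot (argmax_idx c)))) (label_mass B) / 2
           \<le> W_inf A B"
proof (rule W_inf_geI)
  show "simplex_distribution A" "simplex_distribution B"
    using A B by (simp_all add: onehot_distribution_imp_simplex_distribution)
  define R where "R i = prob_simplex \<inter> {c. argmax_idx c = i}" for i :: 'k
  have [measurable]: "Measurable.pred borel (\<lambda>c. argmax_idx c = i)" for i :: 'k
    by measurable
  have far: "1 / 2 \<le> linf_dist c (onehot j)" if "i \<noteq> j" "c \<in> R i" for i j c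
    using that unfolding R_def by (intro linf_dist_onehot_ge_half) auto
  fix \<pi> assume "\<pi> \<in> couplings A B"
  then have "ennreal (1 / 2 * tv_dist (\<lambda>i. measure A (R i)) (label_mass B)) \<le> transport_cost \<pi>"
    by (rule transport_cost_ge_moved_mass)
      (use A B far in \<open>auto simp: R_def simplex_distribution_def disjoint_family_on_def\<close>)
  then show "ennreal (tv_dist (label_mass (distr A borel (\<lambda>c. onehot (argmax_idx c))))
      (label_mass B) / 2) \<le> transport_cost \<pi>"
    using A by (simp add: R_def label_mass_distr_argmax)
qed

section \<open>The maximal coupling\<close>

text \<open>
  The diagonal keeps \<open>min (p i) (q i)\<close>; the excess \<open>max 0 (p i - q i)\<close> is spread over the
  deficits \<open>max 0 (q j - p j)\<close> in proportion to their size. If \<open>tv_dist p q = 0\<close> the second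
  summand is \<open>0\<close> by the convention \<open>x / 0 = 0\<close>.
\<close>

definition maximal_coupling_weight ::
    "('k::finite \<Rightarrow> real) \<Rightarrow> ('k \<Rightarrow> real) \<Rightarrow> 'k \<times> 'k \<Rightarrow> real" where
  "maximal_coupling_weight p q = (\<lambda>(i, j).
     (if i = j then min (p i) (q i) else 0) + max 0 (p i - q i) * max 0 (q j - p j) / tv_dist p q)"

lemma maximal_coupling_weight_nonneg:
  "(\<And>i. 0 \<le> p i) \<Longrightarrow> (\<And>i. 0 \<le> q i) \<Longrightarrow> 0 \<le> maximal_coupling_weight p q z"
  using tv_dist_nonneg[of p q]
  by (auto simp: maximal_coupling_weight_def split: prod.split)

context
  fixes p q :: "'k::finite \<Rightarrow> real"
  assumes sum_p: "sum p UNIV = 1" and sum_q: "sum q UNIV = 1"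
begin

lemma sum_maximal_coupling_weight_fst: "(\<Sum>j\<in>UNIV. maximal_coupling_weight p q (i, j)) = p i"
proof -
  have "(\<Sum>j\<in>UNIV. maximal_coupling_weight p q (i, j))
      = min (p i) (q i) + max 0 (p i - q i) * tv_dist q p / tv_dist p q"
    by (simp add: maximal_coupling_weight_def tv_dist_def sum.distrib sum_divide_distrib[symmetric]
        sum_distrib_left)
  also have "\<dots> = p i"
  proof (cases "tv_dist p q = 0")
    case True
    then have "max 0 (p i - q i) = 0"
      unfolding tv_dist_def by (simp add: sum_nonneg_eq_0_iff)
    then show ?thesis
      by simp
  next
    case False
    then show ?thesis
      by (simp add: tv_dist_commute[OF sum_p sum_q])
  qed
  finally show ?thesis .
qed

lemma sum_maximal_coupling_weight_snd: "(\<Sum>i\<in>UNIV. maximal_coupling_weight p q (i, j)) = q j"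
proof -
  have "(\<Sum>i\<in>UNIV. maximal_coupling_weight p q (i, j))
      = min (p j) (q j) + tv_dist p q * max 0 (q j - p j) / tv_dist p q"
    by (simp add: maximal_coupling_weight_def tv_dist_def sum.distrib sum_divide_distrib[symmetric]
        sum_distrib_right)
  also have "\<dots> = q j"
  proof (cases "tv_dist p q = 0")
    case True
    then have "tv_dist q p = 0"
      by (simp add: tv_dist_commute[OF sum_p sum_q])
    then have "max 0 (q j - p j) = 0"
      unfolding tv_dist_def by (simp add: sum_nonneg_eq_0_iff)
    then show ?thesis
      by simp
  next
    case False
    then show ?thesis
      by simp
  qed
  finally show ?thesis .
qed

lemma sum_maximal_coupling_weight_off_diagonal:
  "(\<Sum>z | fst z \<noteq> snd z. maximal_coupling_weight p q z) \<le> tv_dist p q"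
proof -
  define excess where
    "excess z = max 0 (p (fst z) - q (fst z)) * max 0 (q (snd z) - p (snd z))" for z
  have "(\<Sum>z | fst z \<noteq> snd z. maximal_coupling_weight p q z)
      = (\<Sum>z | fst z \<noteq> snd z. excess z / tv_dist p q)"
    by (intro sum.cong) (auto simp: maximal_coupling_weight_def excess_def)
  also have "\<dots> \<le> (\<Sum>z\<in>UNIV. excess z / tv_dist p q)"
    by (intro sum_mono2) (auto simp: excess_def tv_dist_nonneg)
  also have "\<dots> = tv_dist p q * tv_dist q p / tv_dist p q"
  proof -
    have "(\<Sum>z\<in>UNIV. excess z) = tv_dist p q * tv_dist q p"
      unfolding tv_dist_def sum_product excess_def
      by (subst UNIV_Times_UNIV[symmetric], subst sum.cartesian_product') simp
    then show ?thesis
      by (simp add: sum_divide_distrib[symmetric])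
  qed
  also have "\<dots> \<le> tv_dist p q"
    by (simp add: tv_dist_commute[OF sum_p sum_q])
  finally show ?thesis .
qed

end

definition onehot_coupling ::
    "('k::finite \<times> 'k \<Rightarrow> real) \<Rightarrow> ((real ^ 'k) \<times> (real ^ 'k)) measure" where
  "onehot_coupling w =
     distr (point_measure UNIV (\<lambda>z. ennreal (w z))) (borel \<Otimes>\<^sub>M borel) (map_prod onehot onehot)"

lemma distr_point_measure_eq_onehot_distribution:
  fixes w :: "'a::finite \<Rightarrow> real" and g :: "'a \<Rightarrow> 'k::finite"
  assumes w: "\<And>z. 0 \<le> w z" "sum w UNIV = 1" and N: "onehot_distribution N"
    and mass: "\<And>i. (\<Sum>z | g z = i. w z) = label_mass N i"
  shows "distr (point_measure UNIV (\<lambda>z. ennreal (w z))) borel (\<lambda>z. onehot (g z)) = N"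
proof (rule onehot_distribution_eqI)
  let ?W = "point_measure UNIV (\<lambda>z. ennreal (w z))"
  have "prob_space ?W"
    using w by (intro prob_space_point_measure) auto
  then show "onehot_distribution (distr ?W borel (\<lambda>z. onehot (g z)))"
    by (rule onehot_distribution_distr) (auto simp: space_point_measure)
  show "label_mass (distr ?W borel (\<lambda>z. onehot (g z))) = label_mass N"
  proof
    fix i
    have "label_mass (distr ?W borel (\<lambda>z. onehot (g z))) i = measure ?W {z. g z = i}"
      by (simp add: label_mass_def measure_distr space_point_measure vimage_def)
    also have "\<dots> = label_mass N i"
      using w by (simp add: measure_point_measure_finite_if mass)
    finally show "label_mass (distr ?W borel (\<lambda>z. onehot (g z))) i = label_mass N i" .
  qed
qed (fact N)

lemma onehot_coupling_in_couplings:
  assumes P: "onehot_distribution P" and Q: "onehot_distribution Q" and w: "\<And>z. 0 \<le> w z"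
    and fst_marginal: "\<And>i. (\<Sum>j\<in>UNIV. w (i, j)) = label_mass P i"
    and snd_marginal: "\<And>j. (\<Sum>i\<in>UNIV. w (i, j)) = label_mass Q j"
  shows "onehot_coupling w \<in> couplings P Q"
proof -
  let ?W = "point_measure UNIV (\<lambda>z. ennreal (w z))"
  have fst_fibre: "(\<Sum>z | fst z = i. w z) = (\<Sum>j\<in>UNIV. w (i, j))" for i
    by (rule sum.reindex_cong[of "Pair i"]) (auto simp: inj_on_def)
  have snd_fibre: "(\<Sum>z | snd z = j. w z) = (\<Sum>i\<in>UNIV. w (i, j))" for j
    by (rule sum.reindex_cong[of "\<lambda>i. (i, j)"]) (auto simp: inj_on_def)
  have "sum w UNIV = (\<Sum>i\<in>UNIV. \<Sum>j\<in>UNIV. w (i, j))"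
    by (subst UNIV_Times_UNIV[symmetric], subst sum.cartesian_product') simp
  then have sum_w: "sum w UNIV = 1"
    using sum_label_mass[OF P] by (simp add: fst_marginal)
  have W: "prob_space ?W"
    using w sum_w by (intro prob_space_point_measure) auto
  have h: "map_prod onehot onehot \<in> measurable ?W (borel \<Otimes>\<^sub>M borel)"
    by (simp add: space_point_measure space_pair_measure)
  have sets_P: "sets P = sets borel" and sets_Q: "sets Q = sets borel"
    using P Q by (simp_all add: onehot_distribution_def)
  have "distr (onehot_coupling w) P fst = distr ?W borel (\<lambda>z. onehot (fst z))"
    unfolding onehot_coupling_def
    by (subst distr_cong[OF refl sets_P refl], subst distr_distr[OF measurable_fst h])
      (simp add: comp_def)
  also have "\<dots> = P"
    using w sum_w P
    by (intro distr_point_measure_eq_onehot_distribution) (simp_all add: fst_fibre fst_marginal)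
  finally have "distr (onehot_coupling w) P fst = P" .
  moreover have "distr (onehot_coupling w) Q snd = distr ?W borel (\<lambda>z. onehot (snd z))"
    unfolding onehot_coupling_def
    by (subst distr_cong[OF refl sets_Q refl], subst distr_distr[OF measurable_snd h])
      (simp add: comp_def)
  moreover have "\<dots> = Q"
    using w sum_w Q
    by (intro distr_point_measure_eq_onehot_distribution) (simp_all add: snd_fibre snd_marginal)
  ultimately show ?thesis
    using prob_space.prob_space_distr[OF W h] sets_pair_measure_cong[OF sets_P sets_Q]
    by (simp add: couplings_def onehot_coupling_def)
qed

lemma transport_cost_onehot_coupling:
  assumes "\<And>z. 0 \<le> w z"
  shows "transport_cost (onehot_coupling w) = ennreal (\<Sum>z | fst z \<noteq> snd z. w z)"
proof -
  have "transport_cost (onehot_coupling w)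
      = (\<integral>\<^sup>+ z. ennreal (linf_dist (onehot (fst z)) (onehot (snd z)))
          \<partial>point_measure UNIV (\<lambda>z. ennreal (w z)))"
    unfolding transport_cost_def onehot_coupling_def
    by (subst nn_integral_distr) (simp_all add: space_point_measure space_pair_measure)
  also have "\<dots>
      = (\<Sum>z\<in>UNIV. ennreal (w z) * ennreal (linf_dist (onehot (fst z)) (onehot (snd z))))"
    by (simp add: nn_integral_point_measure_finite)
  also have "\<dots> = (\<Sum>z\<in>UNIV. ennreal (if fst z \<noteq> snd z then w z else 0))"
    by (intro sum.cong) (auto simp: linf_dist_onehot)
  also have "\<dots> = ennreal (\<Sum>z\<in>UNIV. if fst z \<noteq> snd z then w z else 0)"
    using assms by (intro sum_ennreal) simp
  also have "(\<Sum>z\<in>UNIV. if fst z \<noteq> snd z then w z else 0) = (\<Sum>z | fst z \<noteq> snd z. w z)"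
    by (simp add: sum.If_cases)
  finally show ?thesis .
qed

lemma W_inf_le_tv_dist:
  assumes P: "onehot_distribution P" and Q: "onehot_distribution Q"
  shows "W_inf P Q \<le> tv_dist (label_mass P) (label_mass Q)"
proof (rule W_inf_leI)
  let ?w = "maximal_coupling_weight (label_mass P) (label_mass Q)"
  note sums = sum_label_mass[OF P] sum_label_mass[OF Q]
  have w: "0 \<le> ?w z" for z
    by (intro maximal_coupling_weight_nonneg) (simp_all add: label_mass_def)
  show "onehot_coupling ?w \<in> couplings P Q"
    using P Q w by (intro onehot_coupling_in_couplings)
      (simp_all add: sum_maximal_coupling_weight_fst[OF sums]
        sum_maximal_coupling_weight_snd[OF sums])
  show "transport_cost (onehot_coupling ?w) \<le> ennreal (tv_dist (label_mass P) (label_mass Q))"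
    using w sum_maximal_coupling_weight_off_diagonal[OF sums]
    by (simp add: transport_cost_onehot_coupling ennreal_leI)
qed (rule tv_dist_nonneg)

theorem W_inf_pseudo_label_bound:
  fixes A B C :: "(real ^ 'k::{finite,wellorder}) measure"
  assumes A: "simplex_distribution A" and B: "onehot_distribution B" and C: "onehot_distribution C"
  shows "W_inf (distr A borel (\<lambda>c. onehot (argmax_idx c))) C / 2 - W_inf B C \<le> W_inf A B"
proof -
  let ?P = "distr A borel (\<lambda>c. onehot (argmax_idx c))"
  have P: "onehot_distribution ?P"
    using A measurable_cong_sets[of A borel]
    by (intro onehot_distribution_distr) (auto simp: simplex_distribution_def)
  have "W_inf ?P C \<le> tv_dist (label_mass ?P) (label_mass C)"
    using P C by (rule W_inf_le_tv_dist)
  also have "\<dots> \<le> tv_dist (label_mass ?P) (label_mass B) + tv_dist (label_mass B) (label_mass C)"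
    by (rule tv_dist_triangle)
  also have "\<dots> \<le> 2 * W_inf A B + 2 * W_inf B C"
    using tv_dist_argmax_le_W_inf[OF A B] tv_dist_le_W_inf[OF B C] W_inf_nonneg[of B C] by linarith
  finally show ?thesis
    by simp
qed

theorem mainTheorem6:
  fixes MX :: "'x measure"
    and PS PT :: "('x \<times> 'k::{finite,wellorder}) measure"
    and f :: "'x \<Rightarrow> real ^ ('k::{finite,wellorder})"
  assumes "prob_space PS" and "prob_space PT"
    and "sets PS = sets (MX \<Otimes>\<^sub>M count_space UNIV)"
    and "sets PT = sets (MX \<Otimes>\<^sub>M count_space UNIV)"
    and "f \<in> borel_measurable MX"
    and "\<And>x. f x \<in> prob_simplex"
  shows "W_inf (distr PT borel (\<lambda>(x, y). f x)) (distr PS borel (\<lambda>(x, y). onehot y))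
         \<ge> 0.5 * W_inf (distr PT borel (\<lambda>(x, y). onehot (argmax_idx (f x))))
                       (distr PT borel (\<lambda>(x, y). onehot y))
           - W_inf (distr PS borel (\<lambda>(x, y). onehot y)) (distr PT borel (\<lambda>(x, y). onehot y))"
proof -
  note [measurable] = \<open>f \<in> borel_measurable MX\<close>
  have meas_S: "measurable PS = measurable (MX \<Otimes>\<^sub>M count_space UNIV)"
    using assms(3) by (intro ext measurable_cong_sets) simp_all
  have meas_T: "measurable PT = measurable (MX \<Otimes>\<^sub>M count_space UNIV)"
    using assms(4) by (intro ext measurable_cong_sets) simp_all
  have f_T: "(\<lambda>(x, y). f x) \<in> borel_measurable PT"
    unfolding meas_T by measurable
  have A: "simplex_distribution (distr PT borel (\<lambda>(x, y). f x))"
    using assms(2,6) f_T by (intro simplex_distribution_distr) auto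
  have B: "onehot_distribution (distr PS borel (\<lambda>(x, y). onehot y))"
    using assms(1) by (intro onehot_distribution_distr) (auto simp: meas_S)
  have C: "onehot_distribution (distr PT borel (\<lambda>(x, y). onehot y))"
    using assms(2) by (intro onehot_distribution_distr) (auto simp: meas_T)
  have "distr PT borel (\<lambda>(x, y). onehot (argmax_idx (f x)))
      = distr (distr PT borel (\<lambda>(x, y). f x)) borel (\<lambda>c. onehot (argmax_idx c))"
    using f_T by (simp add: distr_distr comp_def case_prod_unfold)
  then show ?thesis
    using W_inf_pseudo_label_bound[OF A B C] by simp
qed

end
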